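(* Let $G$ be a finitely generated torsion-free nilpotent group with two decompositions $\overline{G}=R_1\times\cdots\times R_m=K_1\times\cdots\times K_m$ into nontrivial rationally indecomposable rational subgroups, ordered so that for each $i$ the restriction of the projection $\alpha_i:\overline{G}\to R_i$ to $K_i$ is an isomorphism $K_i\to R_i$ with inverse the restriction to $R_i$ of the projection $\beta_i:\overline{G}\to K_i$, and $\overline{G}=R_1\times\cdots\times R_{i-1}\times K_i\times R_{i+1}\times\cdots\times R_m$. For each $i$ define $\Theta_i:\overline{G}\to\overline{G}$ by $\Theta_i(r_1r_2\cdots r_m)=r_1\cdots r_{i-1}\,\beta_i(r_i)\,r_{i+1}\cdots r_m$ for $r_j\in R_j$. Then $\Theta_i$ is a normal automorphism of $\overline{G}$.
   Context: An automorphism $\theta$ of a group $H$ is normal if $\theta(x^y)=(\theta(x))^y$ for all $x,y\in H$, where $x^y=y^{-1}xy$. Rational closure, rational subgroup and rational indecomposability: $\overline{G}$ is the Malcev completion of $G$ (torsion-free nilpotent, uniquely divisible, containing $G$, every element having a positive power in $G$); a subgroup is rational if closed under taking $n$-th roots for all $n\ge1$; rationally indecomposable means not a direct product of two nontrivial rational subgroups. *)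

theory Defs
  imports "HOL-Algebra.Algebra"
begin

fun lower_central :: "('a, 'b) monoid_scheme \<Rightarrow> nat \<Rightarrow> 'a set" where
  "lower_central G 0 = carrier G"
| "lower_central G (Suc k) = generate G
     (\<Union>x \<in> lower_central G k. \<Union>y \<in> carrier G.
        { x \<otimes>\<^bsub>G\<^esub> y \<otimes>\<^bsub>G\<^esub> inv\<^bsub>G\<^esub> x \<otimes>\<^bsub>G\<^esub> inv\<^bsub>G\<^esub> y })"

definition nilpotent_group :: "('a, 'b) monoid_scheme \<Rightarrow> bool" where
  "nilpotent_group G \<longleftrightarrow> group G \<and> (\<exists>c. lower_central G c = {\<one>\<^bsub>G\<^esub>})"

definition torsion_free :: "('a, 'b) monoid_scheme \<Rightarrow> bool" where
  "torsion_free G \<longleftrightarrow> (\<forall>x \<in> carrier G. \<forall>n::nat. n \<ge> 1 \<longrightarrow> x [^]\<^bsub>G\<^esub> n = \<one>\<^bsub>G\<^esub> \<longrightarrow> x = \<one>\<^bsub>G\<^esub>)"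

definition finitely_generated :: "('a, 'b) monoid_scheme \<Rightarrow> bool" where
  "finitely_generated G \<longleftrightarrow> (\<exists>S. finite S \<and> S \<subseteq> carrier G \<and> generate G S = carrier G)"

definition uniquely_divisible :: "('a, 'b) monoid_scheme \<Rightarrow> bool" where
  "uniquely_divisible G \<longleftrightarrow>
     (\<forall>x \<in> carrier G. \<forall>n::nat. n \<ge> 1 \<longrightarrow> (\<exists>!y. y \<in> carrier G \<and> y [^]\<^bsub>G\<^esub> n = x))"

text \<open>Gb is a Malcev completion of its subgroup H (the group G of the paper, realised
  as a subgroup of Gb): Gb torsion-free nilpotent, uniquely divisible, contains H,
  every element of Gb has a positive power in H.\<close>
definition malcev_completion :: "('a, 'b) monoid_scheme \<Rightarrow> 'a set \<Rightarrow> bool" where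
  "malcev_completion Gb H \<longleftrightarrow> group Gb \<and> nilpotent_group Gb \<and> torsion_free Gb
     \<and> uniquely_divisible Gb \<and> subgroup H Gb
     \<and> (\<forall>x \<in> carrier Gb. \<exists>n::nat. n \<ge> 1 \<and> x [^]\<^bsub>Gb\<^esub> n \<in> H)"

definition rational_subgroup :: "('a, 'b) monoid_scheme \<Rightarrow> 'a set \<Rightarrow> bool" where
  "rational_subgroup G A \<longleftrightarrow> subgroup A G \<and>
     (\<forall>x \<in> carrier G. \<forall>n::nat. n \<ge> 1 \<longrightarrow> x [^]\<^bsub>G\<^esub> n \<in> A \<longrightarrow> x \<in> A)"

definition prodl :: "('a, 'b) monoid_scheme \<Rightarrow> (nat \<Rightarrow> 'a) \<Rightarrow> nat \<Rightarrow> 'a" where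
  "prodl G r m = foldr (\<lambda>j acc. r j \<otimes>\<^bsub>G\<^esub> acc) [0..<m] \<one>\<^bsub>G\<^esub>"

definition is_decomp :: "('a, 'b) monoid_scheme \<Rightarrow> nat \<Rightarrow> (nat \<Rightarrow> 'a set) \<Rightarrow> 'a \<Rightarrow> (nat \<Rightarrow> 'a) \<Rightarrow> bool" where
  "is_decomp G m R g r \<longleftrightarrow> (\<forall>j<m. r j \<in> R j) \<and> (\<forall>j\<ge>m. r j = \<one>\<^bsub>G\<^esub>) \<and> g = prodl G r m"

definition internal_direct_product ::
    "('a, 'b) monoid_scheme \<Rightarrow> 'a set \<Rightarrow> nat \<Rightarrow> (nat \<Rightarrow> 'a set) \<Rightarrow> bool" where
  "internal_direct_product G H m R \<longleftrightarrow>
     (\<forall>i<m. subgroup (R i) G \<and> R i \<subseteq> H)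
     \<and> (\<forall>i<m. \<forall>j<m. i \<noteq> j \<longrightarrow> (\<forall>x \<in> R i. \<forall>y \<in> R j. x \<otimes>\<^bsub>G\<^esub> y = y \<otimes>\<^bsub>G\<^esub> x))
     \<and> (\<forall>g \<in> H. \<exists>!r. is_decomp G m R g r)"

definition rationally_indecomposable :: "('a, 'b) monoid_scheme \<Rightarrow> 'a set \<Rightarrow> bool" where
  "rationally_indecomposable G A \<longleftrightarrow>
     \<not> (\<exists>B C. rational_subgroup G B \<and> rational_subgroup G C
          \<and> B \<noteq> {\<one>\<^bsub>G\<^esub>} \<and> C \<noteq> {\<one>\<^bsub>G\<^esub>}
          \<and> internal_direct_product G A 2 (\<lambda>i. if i = 0 then B else C))"

definition components :: "('a, 'b) monoid_scheme \<Rightarrow> nat \<Rightarrow> (nat \<Rightarrow> 'a set) \<Rightarrow> 'a \<Rightarrow> (nat \<Rightarrow> 'a)" where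
  "components G m R g = (THE r. is_decomp G m R g r)"

definition proj :: "('a, 'b) monoid_scheme \<Rightarrow> nat \<Rightarrow> (nat \<Rightarrow> 'a set) \<Rightarrow> nat \<Rightarrow> 'a \<Rightarrow> 'a" where
  "proj G m R i g = components G m R g i"

definition Theta :: "('a, 'b) monoid_scheme \<Rightarrow> nat \<Rightarrow> (nat \<Rightarrow> 'a set) \<Rightarrow> (nat \<Rightarrow> 'a set) \<Rightarrow> nat \<Rightarrow> 'a \<Rightarrow> 'a" where
  "Theta G m R K i = (\<lambda>g \<in> carrier G.
     (let r = components G m R g in prodl G (r(i := proj G m K i (r i))) m))"

definition normal_automorphism :: "('a, 'b) monoid_scheme \<Rightarrow> ('a \<Rightarrow> 'a) \<Rightarrow> bool" where
  "normal_automorphism G \<theta> \<longleftrightarrow> \<theta> \<in> auto G \<and>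
     (\<forall>x \<in> carrier G. \<forall>y \<in> carrier G.
        \<theta> (inv\<^bsub>G\<^esub> y \<otimes>\<^bsub>G\<^esub> x \<otimes>\<^bsub>G\<^esub> y) = inv\<^bsub>G\<^esub> y \<otimes>\<^bsub>G\<^esub> \<theta> x \<otimes>\<^bsub>G\<^esub> y)"

end

theory Submission
  imports Defs
begin

text \<open>
  Write \<open>y = r\<^sub>1 \<cdots> r\<^sub>m\<close> with \<open>r\<^sub>j \<in> R\<^sub>j\<close>. The map \<open>\<Theta>\<^sub>i\<close> reads off the components with
  respect to the decomposition by the \<open>R\<^sub>j\<close>, applies \<open>\<beta>\<^sub>i\<close> to the \<open>i\<close>-th one and multiplies
  out with respect to the exchanged decomposition by \<open>R\<^sub>1, \<dots>, K\<^sub>i, \<dots>, R\<^sub>m\<close>; all three steps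
  are multiplicative, and \<open>\<alpha>\<^sub>i\<close> undoes the middle one, so \<open>\<Theta>\<^sub>i\<close> is an automorphism.
  It is normal because it is central: \<open>\<Theta>\<^sub>i(y) y\<^sup>-\<^sup>1 = \<beta>\<^sub>i(r\<^sub>i) r\<^sub>i\<^sup>-\<^sup>1\<close> commutes with every \<open>R\<^sub>j\<close>,
  \<open>j \<noteq> i\<close>, because both \<open>K\<^sub>i\<close> and \<open>R\<^sub>i\<close> do, and its \<open>R\<^sub>i\<close>-component is
  \<open>\<alpha>\<^sub>i(\<beta>\<^sub>i(r\<^sub>i)) r\<^sub>i\<^sup>-\<^sup>1 = 1\<close>, so it lies in the product of the other factors, which centralises
  \<open>R\<^sub>i\<close>.
\<close>

definition central :: "('a, 'b) monoid_scheme \<Rightarrow> 'a \<Rightarrow> bool" where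
  "central G c \<longleftrightarrow> c \<in> carrier G \<and> (\<forall>z \<in> carrier G. c \<otimes>\<^bsub>G\<^esub> z = z \<otimes>\<^bsub>G\<^esub> c)"

definition ordered_prod :: "('a, 'b) monoid_scheme \<Rightarrow> nat list \<Rightarrow> (nat \<Rightarrow> 'a) \<Rightarrow> 'a" where
  "ordered_prod G xs r = foldr (\<lambda>j acc. r j \<otimes>\<^bsub>G\<^esub> acc) xs \<one>\<^bsub>G\<^esub>"

lemma prodl_eq_ordered_prod: "prodl G r m = ordered_prod G [0..<m] r"
  by (simp add: prodl_def ordered_prod_def)

lemma ordered_prod_Nil [simp]: "ordered_prod G [] r = \<one>\<^bsub>G\<^esub>"
  and ordered_prod_Cons [simp]: "ordered_prod G (j # xs) r = r j \<otimes>\<^bsub>G\<^esub> ordered_prod G xs r"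
  by (simp_all add: ordered_prod_def)

context group
begin

lemma commute_inv:
  assumes "x \<in> carrier G" "u \<in> carrier G" "x \<otimes> u = u \<otimes> x"
  shows "inv x \<otimes> u = u \<otimes> inv x"
proof -
  have "inv x \<otimes> u = inv x \<otimes> (u \<otimes> x) \<otimes> inv x" using assms(1,2) by (simp add: m_assoc)
  also have "\<dots> = inv x \<otimes> (x \<otimes> u) \<otimes> inv x" using assms by simp
  also have "\<dots> = u \<otimes> inv x" using assms(1,2) by (simp add: m_assoc[symmetric])
  finally show ?thesis .
qed

lemma ordered_prod_closed: "(\<And>j. j \<in> set xs \<Longrightarrow> r j \<in> carrier G) \<Longrightarrow> ordered_prod G xs r \<in> carrier G"
  by (induction xs) auto

lemma ordered_prod_cong: "(\<And>j. j \<in> set xs \<Longrightarrow> r j = s j) \<Longrightarrow> ordered_prod G xs r = ordered_prod G xs s"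
  by (induction xs) auto

lemma ordered_prod_one [simp]: "ordered_prod G xs (\<lambda>_. \<one>) = \<one>"
  by (induction xs) auto

lemma commute_ordered_prod:
  assumes "x \<in> carrier G" and "\<And>j. j \<in> set xs \<Longrightarrow> r j \<in> carrier G \<and> x \<otimes> r j = r j \<otimes> x"
  shows "x \<otimes> ordered_prod G xs r = ordered_prod G xs r \<otimes> x"
  using assms(2)
proof (induction xs)
  case (Cons a xs)
  have ra: "r a \<in> carrier G" "x \<otimes> r a = r a \<otimes> x" using Cons.prems by auto
  have p: "ordered_prod G xs r \<in> carrier G" using Cons.prems by (auto intro: ordered_prod_closed)
  have "x \<otimes> (r a \<otimes> ordered_prod G xs r) = r a \<otimes> (x \<otimes> ordered_prod G xs r)"
    using ra p assms(1) by (simp add: m_assoc[symmetric])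
  also have "\<dots> = (r a \<otimes> ordered_prod G xs r) \<otimes> x"
    using Cons ra p assms(1) by (simp add: m_assoc)
  finally show ?case by simp
qed (use assms(1) in simp)

lemma ordered_prod_mult:
  assumes "distinct xs" and "\<And>j. j \<in> set xs \<Longrightarrow> r j \<in> carrier G \<and> s j \<in> carrier G"
    and "\<And>a b. a \<in> set xs \<Longrightarrow> b \<in> set xs \<Longrightarrow> a \<noteq> b \<Longrightarrow> s a \<otimes> r b = r b \<otimes> s a"
  shows "ordered_prod G xs r \<otimes> ordered_prod G xs s = ordered_prod G xs (\<lambda>j. r j \<otimes> s j)"
  using assms
proof (induction xs)
  case (Cons a xs)
  have c: "r a \<in> carrier G" "s a \<in> carrier G" using Cons.prems by auto
  have p: "ordered_prod G xs r \<in> carrier G" "ordered_prod G xs s \<in> carrier G"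
    using Cons.prems by (auto intro: ordered_prod_closed)
  have "s a \<otimes> ordered_prod G xs r = ordered_prod G xs r \<otimes> s a"
    using Cons.prems by (intro commute_ordered_prod) auto
  then have "(r a \<otimes> ordered_prod G xs r) \<otimes> (s a \<otimes> ordered_prod G xs s)
      = (r a \<otimes> s a) \<otimes> (ordered_prod G xs r \<otimes> ordered_prod G xs s)"
    using c p by (simp add: m_assoc) (simp add: m_assoc[symmetric])
  with Cons show ?case by simp
qed simp

lemma ordered_prod_extract:
  assumes "distinct xs" "i \<in> set xs" "\<And>j. j \<in> set xs \<Longrightarrow> r j \<in> carrier G"
    and "\<And>j. j \<in> set xs \<Longrightarrow> j \<noteq> i \<Longrightarrow> r i \<otimes> r j = r j \<otimes> r i"
  shows "ordered_prod G xs r = r i \<otimes> ordered_prod G xs (r(i := \<one>))"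
  using assms
proof (induction xs)
  case (Cons a xs)
  have p: "ordered_prod G xs r \<in> carrier G" "ordered_prod G xs (r(i := \<one>)) \<in> carrier G"
    using Cons.prems by (auto intro!: ordered_prod_closed)
  show ?case
  proof (cases "a = i")
    case True
    with Cons.prems have "ordered_prod G xs (r(i := \<one>)) = ordered_prod G xs r"
      by (intro ordered_prod_cong) auto
    with True p show ?thesis by (simp del: fun_upd_apply add: fun_upd_same)
  next
    case False
    have IH: "ordered_prod G xs r = r i \<otimes> ordered_prod G xs (r(i := \<one>))"
      using Cons.prems False by (intro Cons.IH) auto
    have c: "r a \<in> carrier G" "r i \<in> carrier G" using Cons.prems by auto
    have "r a \<otimes> ordered_prod G xs r = (r a \<otimes> r i) \<otimes> ordered_prod G xs (r(i := \<one>))"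
      unfolding IH using c p by (simp only: m_assoc)
    also have "\<dots> = (r i \<otimes> r a) \<otimes> ordered_prod G xs (r(i := \<one>))"
      using Cons.prems(4)[of a] False by simp
    also have "\<dots> = r i \<otimes> (r a \<otimes> ordered_prod G xs (r(i := \<one>)))"
      using c p by (simp only: m_assoc)
    finally show ?thesis by (simp only: ordered_prod_Cons fun_upd_other[OF False])
  qed
qed simp

lemma normal_automorphismI_central:
  assumes auto: "\<theta> \<in> auto G" and central: "\<And>y. y \<in> carrier G \<Longrightarrow> central G (\<theta> y \<otimes> inv y)"
  shows "normal_automorphism G \<theta>"
  unfolding normal_automorphism_def
proof (intro conjI auto ballI)
  fix x y assume x: "x \<in> carrier G" and y: "y \<in> carrier G"
  interpret group_hom G G \<theta> using auto by unfold_locales (simp add: auto_def)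
  define d where "d = \<theta> y \<otimes> inv y"
  have d: "d \<in> carrier G" "\<And>z. z \<in> carrier G \<Longrightarrow> d \<otimes> z = z \<otimes> d"
    using central[OF y] by (auto simp: central_def d_def)
  have \<theta>y: "\<theta> y = d \<otimes> y" using y by (simp add: d_def m_assoc)
  define b where "b = inv y \<otimes> \<theta> x \<otimes> y"
  have b: "b \<in> carrier G" using x y by (simp add: b_def)
  have "\<theta> (inv y \<otimes> x \<otimes> y) = inv (y \<otimes> d) \<otimes> \<theta> x \<otimes> (y \<otimes> d)"
    using x y \<theta>y d by simp
  also have "\<dots> = inv d \<otimes> (b \<otimes> d)"
    using x y d by (simp add: b_def inv_mult_group m_assoc)
  also have "\<dots> = inv d \<otimes> (d \<otimes> b)" using d(2)[OF b] by simp
  also have "\<dots> = b" using b d(1) by (simp add: m_assoc[symmetric])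
  finally show "\<theta> (inv y \<otimes> x \<otimes> y) = inv y \<otimes> \<theta> x \<otimes> y" by (simp add: b_def)
qed

end

locale direct_decomposition = group G for G (structure) +
  fixes m :: nat and D :: "nat \<Rightarrow> 'a set"
  assumes decomposition: "internal_direct_product G (carrier G) m D"
begin

lemma subgroup_factor: "j < m \<Longrightarrow> subgroup (D j) G"
  using decomposition by (simp add: internal_direct_product_def)

lemma factor_closed: "j < m \<Longrightarrow> x \<in> D j \<Longrightarrow> x \<in> carrier G"
  using subgroup_factor subgroup.subset by blast

lemma factors_commute:
  "i < m \<Longrightarrow> j < m \<Longrightarrow> i \<noteq> j \<Longrightarrow> x \<in> D i \<Longrightarrow> y \<in> D j \<Longrightarrow> x \<otimes> y = y \<otimes> x"
  using decomposition unfolding internal_direct_product_def by blast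

lemma is_decomp_components:
  assumes "g \<in> carrier G" shows "is_decomp G m D g (components G m D g)"
proof -
  have "\<exists>!r. is_decomp G m D g r"
    using decomposition assms unfolding internal_direct_product_def by blast
  then show ?thesis unfolding components_def by (rule theI')
qed

lemma components_in: "g \<in> carrier G \<Longrightarrow> j < m \<Longrightarrow> components G m D g j \<in> D j"
  using is_decomp_components unfolding is_decomp_def by blast

lemma components_out: "g \<in> carrier G \<Longrightarrow> m \<le> j \<Longrightarrow> components G m D g j = \<one>"
  using is_decomp_components unfolding is_decomp_def by simp

lemma components_closed:
  assumes "g \<in> carrier G" shows "components G m D g j \<in> carrier G"
proof (cases "j < m")
  case True
  show ?thesis by (rule factor_closed[OF True components_in[OF assms True]])
next
  case False
  then show ?thesis using assms by (simp add: components_out)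
qed

lemma prodl_components: "g \<in> carrier G \<Longrightarrow> prodl G (components G m D g) m = g"
  using is_decomp_components unfolding is_decomp_def by metis

lemma prodl_closed: "(\<And>j. j < m \<Longrightarrow> r j \<in> carrier G) \<Longrightarrow> prodl G r m \<in> carrier G"
  unfolding prodl_eq_ordered_prod by (rule ordered_prod_closed) (simp only: set_upt atLeastLessThan_iff)

lemma components_prodl:
  assumes "\<And>j. j < m \<Longrightarrow> r j \<in> D j" and "\<And>j. m \<le> j \<Longrightarrow> r j = \<one>"
  shows "components G m D (prodl G r m) = r"
proof -
  have g: "prodl G r m \<in> carrier G" using factor_closed[OF _ assms(1)] by (rule prodl_closed)
  then have "\<exists>!s. is_decomp G m D (prodl G r m) s"
    using decomposition unfolding internal_direct_product_def by blast
  moreover have "is_decomp G m D (prodl G r m) r"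
    using assms unfolding is_decomp_def by simp
  ultimately show ?thesis unfolding components_def by (rule the1_equality[where P = "is_decomp G m D _"])
qed

lemma components_mult:
  assumes g: "g \<in> carrier G" and h: "h \<in> carrier G"
  shows "components G m D (g \<otimes> h) = (\<lambda>j. components G m D g j \<otimes> components G m D h j)"
proof -
  let ?r = "components G m D g" and ?s = "components G m D h"
  have "prodl G ?r m \<otimes> prodl G ?s m = prodl G (\<lambda>j. ?r j \<otimes> ?s j) m"
    unfolding prodl_eq_ordered_prod using g h
    by (intro ordered_prod_mult) (auto intro: components_closed factors_commute components_in)
  then have "g \<otimes> h = prodl G (\<lambda>j. ?r j \<otimes> ?s j) m"
    using g h by (simp add: prodl_components)
  moreover have "?r j \<otimes> ?s j \<in> D j" if "j < m" for j
    using that g h by (auto intro: subgroup.m_closed[OF subgroup_factor] components_in)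
  ultimately show ?thesis using g h by (simp add: components_prodl components_out)
qed

lemma proj_mult:
  "g \<in> carrier G \<Longrightarrow> h \<in> carrier G \<Longrightarrow> proj G m D i (g \<otimes> h) = proj G m D i g \<otimes> proj G m D i h"
  unfolding proj_def by (simp add: components_mult)

lemma proj_in: "g \<in> carrier G \<Longrightarrow> i < m \<Longrightarrow> proj G m D i g \<in> D i"
  unfolding proj_def by (rule components_in)

lemma prodl_extract:
  assumes "i < m" and "\<And>j. j < m \<Longrightarrow> r j \<in> D j"
  shows "prodl G r m = r i \<otimes> prodl G (r(i := \<one>)) m"
  unfolding prodl_eq_ordered_prod using assms
  by (intro ordered_prod_extract) (auto intro: factor_closed factors_commute)

lemma proj_factor:
  assumes i: "i < m" and x: "x \<in> D i"
  shows "proj G m D i x = x"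
proof -
  let ?r = "(\<lambda>_. \<one>)(i := x)"
  have r: "?r j \<in> D j" if "j < m" for j
    using that x subgroup.one_closed[OF subgroup_factor] by auto
  have "prodl G ?r m = ?r i \<otimes> prodl G (?r(i := \<one>)) m" by (rule prodl_extract[OF i r])
  also have "?r(i := \<one>) = (\<lambda>_. \<one>)" by auto
  finally have "prodl G ?r m = x"
    using factor_closed[OF i x] by (simp only: fun_upd_same prodl_eq_ordered_prod ordered_prod_one r_one)
  then have "components G m D x = ?r"
    using components_prodl[OF r] i by fastforce
  then show ?thesis unfolding proj_def by simp
qed

lemma commute_if_proj_one:
  assumes g: "g \<in> carrier G" and i: "i < m" and trivial: "proj G m D i g = \<one>" and u: "u \<in> D i"
  shows "g \<otimes> u = u \<otimes> g"
proof -
  let ?r = "(components G m D g)(i := \<one>)"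
  have "g = ordered_prod G [0..<m] (components G m D g)"
    using prodl_components[OF g] by (simp add: prodl_eq_ordered_prod)
  also have "\<dots> = ordered_prod G [0..<m] ?r"
    using trivial by (intro ordered_prod_cong) (simp add: proj_def)
  finally have g_eq: "g = ordered_prod G [0..<m] ?r" .
  have "u \<otimes> ordered_prod G [0..<m] ?r = ordered_prod G [0..<m] ?r \<otimes> u"
  proof (rule commute_ordered_prod)
    show "u \<in> carrier G" using factor_closed[OF i u] .
    fix j assume "j \<in> set [0..<m]"
    then show "?r j \<in> carrier G \<and> u \<otimes> ?r j = ?r j \<otimes> u"
      using g i u factor_closed[OF i u]
      by (cases "j = i") (auto intro: components_closed factors_commute components_in)
  qed
  then show ?thesis using g_eq by simp
qed

lemma central_if_commutes_with_factors:
  assumes c: "c \<in> carrier G" and comm: "\<And>j u. j < m \<Longrightarrow> u \<in> D j \<Longrightarrow> c \<otimes> u = u \<otimes> c"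
  shows "central G c"
  unfolding central_def
proof (intro conjI c ballI)
  fix z assume z: "z \<in> carrier G"
  have "c \<otimes> prodl G (components G m D z) m = prodl G (components G m D z) m \<otimes> c"
    unfolding prodl_eq_ordered_prod using z
    by (intro commute_ordered_prod c) (auto intro: comm components_closed components_in)
  then show "c \<otimes> z = z \<otimes> c" using z by (simp add: prodl_components)
qed

end

locale factor_exchange =
  group G + R: direct_decomposition G m R + K: direct_decomposition G m K
  for G (structure) and m R K +
  fixes i :: nat
  assumes i_less: "i < m"
    and exchange: "internal_direct_product G (carrier G) m (R(i := K i))"
    and beta_alpha: "x \<in> K i \<Longrightarrow> proj G m K i (proj G m R i x) = x"
    and alpha_beta: "y \<in> R i \<Longrightarrow> proj G m R i (proj G m K i y) = y"
begin

sublocale E: direct_decomposition G m "R(i := K i)"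
  by unfold_locales (rule exchange)

definition exchanged_components :: "'a \<Rightarrow> nat \<Rightarrow> 'a" where
  "exchanged_components g = (components G m R g)(i := proj G m K i (proj G m R i g))"

lemma Theta_eq: "g \<in> carrier G \<Longrightarrow> Theta G m R K i g = prodl G (exchanged_components g) m"
  by (simp add: Theta_def exchanged_components_def proj_def Let_def)

lemma exchanged_components_in:
  assumes g: "g \<in> carrier G" and j: "j < m"
  shows "exchanged_components g j \<in> (R(i := K i)) j"
proof (cases "j = i")
  case True
  have "proj G m R i g \<in> carrier G" using R.factor_closed[OF i_less R.proj_in[OF g i_less]] .
  with True show ?thesis by (simp add: exchanged_components_def K.proj_in i_less)
qed (simp add: exchanged_components_def R.components_in g j)

lemma exchanged_components_out: "g \<in> carrier G \<Longrightarrow> m \<le> j \<Longrightarrow> exchanged_components g j = \<one>"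
  using i_less by (simp add: exchanged_components_def R.components_out)

lemma components_Theta:
  "g \<in> carrier G \<Longrightarrow> components G m (R(i := K i)) (Theta G m R K i g) = exchanged_components g"
  unfolding Theta_eq
  by (rule E.components_prodl) (simp_all only: exchanged_components_in exchanged_components_out)

lemma Theta_closed: "g \<in> carrier G \<Longrightarrow> Theta G m R K i g \<in> carrier G"
  unfolding Theta_eq by (rule E.prodl_closed) (rule E.factor_closed[OF _ exchanged_components_in])

lemma exchanged_components_mult:
  assumes "g \<in> carrier G" "h \<in> carrier G"
  shows "exchanged_components (g \<otimes> h) = (\<lambda>j. exchanged_components g j \<otimes> exchanged_components h j)"
  using assms R.proj_in[OF _ i_less] R.factor_closed[OF i_less]
  by (auto simp: exchanged_components_def R.components_mult R.proj_mult K.proj_mult)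

lemma Theta_mult:
  assumes g: "g \<in> carrier G" and h: "h \<in> carrier G"
  shows "Theta G m R K i (g \<otimes> h) = Theta G m R K i g \<otimes> Theta G m R K i h"
proof -
  let ?T = "Theta G m R K i"
  have "?T (g \<otimes> h) = prodl G (\<lambda>j. exchanged_components g j \<otimes> exchanged_components h j) m"
    using g h by (simp add: Theta_eq exchanged_components_mult)
  also have "(\<lambda>j. exchanged_components g j \<otimes> exchanged_components h j)
      = components G m (R(i := K i)) (?T g \<otimes> ?T h)"
    using g h by (simp add: E.components_mult Theta_closed components_Theta)
  also have "prodl G \<dots> m = ?T g \<otimes> ?T h"
    using g h by (simp add: E.prodl_components Theta_closed)
  finally show ?thesis .
qed

lemma inj_on_Theta: "inj_on (Theta G m R K i) (carrier G)"
proof (rule inj_onI)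
  fix g h assume g: "g \<in> carrier G" and h: "h \<in> carrier G"
    and eq: "Theta G m R K i g = Theta G m R K i h"
  then have ex: "exchanged_components g = exchanged_components h"
    by (metis components_Theta)
  have "components G m R g = components G m R h"
  proof
    fix j show "components G m R g j = components G m R h j"
    proof (cases "j = i")
      case True
      from ex have "proj G m K i (proj G m R i g) = proj G m K i (proj G m R i h)"
        unfolding exchanged_components_def by (metis fun_upd_same)
      then have "proj G m R i g = proj G m R i h"
        using alpha_beta R.proj_in g h i_less by metis
      with True show ?thesis by (simp add: proj_def)
    next
      case False
      with ex show ?thesis unfolding exchanged_components_def by (metis fun_upd_other)
    qed
  qed
  then show "g = h" using g h by (metis R.prodl_components)
qed

lemma Theta_surj: "Theta G m R K i ` carrier G = carrier G"
proof
  show "Theta G m R K i ` carrier G \<subseteq> carrier G" using Theta_closed by auto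
  show "carrier G \<subseteq> Theta G m R K i ` carrier G"
  proof
    fix t assume t: "t \<in> carrier G"
    define s where "s = components G m (R(i := K i)) t"
    define r where "r = s(i := proj G m R i (s i))"
    have si: "s i \<in> K i" using E.components_in[OF t i_less] by (simp add: s_def)
    have r_in: "r j \<in> R j" if "j < m" for j
      using that si K.factor_closed[OF i_less si] E.components_in[OF t that]
      by (cases "j = i") (auto simp: r_def s_def R.proj_in)
    have r_out: "r j = \<one>" if "m \<le> j" for j
      using that t i_less by (simp add: r_def s_def E.components_out)
    define g where "g = prodl G r m"
    have g: "g \<in> carrier G" unfolding g_def using R.factor_closed r_in by (simp add: R.prodl_closed)
    have "components G m R g = r" unfolding g_def using r_in r_out by (rule R.components_prodl)
    then have "exchanged_components g = r(i := proj G m K i (r i))"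
      by (simp add: exchanged_components_def proj_def[of G m R])
    also have "\<dots> = s" using beta_alpha[OF si] by (simp add: r_def)
    finally have "exchanged_components g = s" .
    then have "Theta G m R K i g = t"
      using g t by (simp add: Theta_eq s_def E.prodl_components)
    with g show "t \<in> Theta G m R K i ` carrier G" by blast
  qed
qed

lemma Theta_auto: "Theta G m R K i \<in> auto G"
proof -
  have "Theta G m R K i \<in> hom G G" by (intro homI) (simp_all add: Theta_closed Theta_mult)
  moreover have "Theta G m R K i \<in> extensional (carrier G)" by (simp add: Theta_def)
  ultimately show ?thesis
    using inj_on_Theta Theta_surj by (simp add: auto_def Bij_def bij_betw_def)
qed

lemma central_beta_quotient:
  assumes x: "x \<in> R i"
  shows "central G (proj G m K i x \<otimes> inv x)"
proof -
  define k where "k = proj G m K i x"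
  define d where "d = k \<otimes> inv x"
  have x_closed: "x \<in> carrier G" using R.factor_closed[OF i_less x] .
  have k: "k \<in> K i" unfolding k_def using K.proj_in[OF x_closed i_less] .
  have k_closed: "k \<in> carrier G" using K.factor_closed[OF i_less k] .
  have d_closed: "d \<in> carrier G" using k_closed x_closed by (simp add: d_def)
  have "central G d"
  proof (rule R.central_if_commutes_with_factors[OF d_closed])
    fix j u assume j: "j < m" and u: "u \<in> R j"
    have u_closed: "u \<in> carrier G" using R.factor_closed[OF j u] .
    show "d \<otimes> u = u \<otimes> d"
    proof (cases "j = i")
      case True
      have "proj G m R i d \<otimes> x = proj G m R i (d \<otimes> x)"
        using d_closed x_closed by (simp add: R.proj_mult R.proj_factor[OF i_less x])
      also have "d \<otimes> x = k" using k_closed x_closed by (simp add: d_def m_assoc)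
      also have "proj G m R i k = x" using alpha_beta[OF x] by (simp add: k_def)
      finally have "proj G m R i d = \<one>"
        using R.factor_closed[OF i_less R.proj_in[OF d_closed i_less]] x_closed by simp
      with True show ?thesis using R.commute_if_proj_one d_closed i_less u by simp
    next
      case False
      have "x \<otimes> u = u \<otimes> x" using R.factors_commute[OF i_less j _ x u] False by simp
      then have x_inv: "inv x \<otimes> u = u \<otimes> inv x" by (rule commute_inv[OF x_closed u_closed])
      have "k \<otimes> u = u \<otimes> k" using E.factors_commute[OF i_less j, of k u] k u False by simp
      then show ?thesis
        using k_closed x_closed u_closed x_inv
        by (simp add: d_def m_assoc) (simp add: m_assoc[symmetric])
    qed
  qed
  then show ?thesis by (simp add: d_def k_def)
qed

lemma central_Theta_quotient:
  assumes y: "y \<in> carrier G"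
  shows "central G (Theta G m R K i y \<otimes> inv y)"
proof -
  define r where "r = components G m R y"
  define w where "w = prodl G (r(i := \<one>)) m"
  have ri: "r i \<in> R i" using R.components_in[OF y i_less] by (simp add: r_def)
  have r_in: "r j \<in> R j" if "j < m" for j using R.components_in[OF y that] by (simp add: r_def)
  have ri_closed: "r i \<in> carrier G" using R.factor_closed[OF i_less ri] .
  have k_closed: "proj G m K i (r i) \<in> carrier G"
    using K.factor_closed[OF i_less K.proj_in[OF ri_closed i_less]] .
  have w_closed: "w \<in> carrier G"
    unfolding w_def using R.components_closed[OF y] by (simp add: R.prodl_closed r_def)
  have y_eq: "y = r i \<otimes> w"
    using R.prodl_extract[OF i_less r_in] R.prodl_components[OF y] by (simp add: r_def w_def)
  have "Theta G m R K i y = exchanged_components y i \<otimes> prodl G ((exchanged_components y)(i := \<one>)) m"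
    unfolding Theta_eq[OF y] using i_less exchanged_components_in[OF y] by (rule E.prodl_extract)
  also have "\<dots> = proj G m K i (r i) \<otimes> w"
    by (simp add: exchanged_components_def w_def r_def proj_def[of G m R])
  finally have "Theta G m R K i y \<otimes> inv y = (proj G m K i (r i) \<otimes> w) \<otimes> inv (r i \<otimes> w)"
    by (simp only: flip: y_eq)
  also have "\<dots> = proj G m K i (r i) \<otimes> inv (r i)"
    using k_closed ri_closed w_closed
    by (simp add: inv_mult_group m_assoc) (simp add: m_assoc[symmetric])
  finally show ?thesis using central_beta_quotient[OF ri] by simp
qed

theorem normal_automorphism_Theta: "normal_automorphism G (Theta G m R K i)"
  by (rule normal_automorphismI_central[OF Theta_auto central_Theta_quotient])

end

theorem mainTheorem6:
  fixes Gb :: "('a, 'b) monoid_scheme" and G :: "'a set"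
    and R K :: "nat \<Rightarrow> 'a set" and m :: nat
  assumes grp: "group Gb"
    and malcev: "malcev_completion Gb G"
    and fg: "finitely_generated (Gb\<lparr>carrier := G\<rparr>)"
    and tf: "torsion_free (Gb\<lparr>carrier := G\<rparr>)"
    and nil: "nilpotent_group (Gb\<lparr>carrier := G\<rparr>)"
    and decR: "internal_direct_product Gb (carrier Gb) m R"
    and decK: "internal_direct_product Gb (carrier Gb) m K"
    and R_good: "\<And>i. i < m \<Longrightarrow> R i \<noteq> {\<one>\<^bsub>Gb\<^esub>} \<and> rational_subgroup Gb (R i)
                                 \<and> rationally_indecomposable Gb (R i)"
    and K_good: "\<And>i. i < m \<Longrightarrow> K i \<noteq> {\<one>\<^bsub>Gb\<^esub>} \<and> rational_subgroup Gb (K i)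
                                 \<and> rationally_indecomposable Gb (K i)"
    and alpha_iso: "\<And>i. i < m \<Longrightarrow>
        proj Gb m R i \<in> iso (Gb\<lparr>carrier := K i\<rparr>) (Gb\<lparr>carrier := R i\<rparr>)"
    and beta_inv: "\<And>i. i < m \<Longrightarrow>
        (\<forall>x \<in> K i. proj Gb m K i (proj Gb m R i x) = x)
      \<and> (\<forall>y \<in> R i. proj Gb m R i (proj Gb m K i y) = y)"
    and exchange: "\<And>i. i < m \<Longrightarrow> internal_direct_product Gb (carrier Gb) m (R(i := K i))"
    and i: "i < m"
  shows "normal_automorphism Gb (Theta Gb m R K i)"
proof -
  interpret factor_exchange Gb m R K i
    using grp decR decK exchange[OF i] beta_inv[OF i] i
    by (simp add: factor_exchange_def factor_exchange_axioms_def direct_decomposition_def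
        direct_decomposition_axioms_def)
  show ?thesis by (rule normal_automorphism_Theta)
qed

end
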